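(* Let $(X,b)$ be a locally finite weighted graph, $F$ a Hermitian vector bundle over $X$, $\Phi$ a connection on $F$, $W$ a self-adjoint bundle endomorphism, and $\mathcal M=\mathcal M_{b,\Phi,W}\colon\Gamma(X;F)\to\Gamma(X;F)$. Then $\mathcal M$ is continuous and, identifying the continuous dual of $\Gamma(X;F)$ with $\Gamma_c(X;F)$ via the pairing $(\varphi,f)=\sum_x\langle\varphi(x),f(x)\rangle_x$, the dual operator of $\mathcal M$ is $\mathcal M|_{\Gamma_c(X;F)}$. In particular, $\mathcal M$ is surjective if and only if $\mathcal M|_{\Gamma_c(X;F)}$ is injective.
   Context: Weighted graph: $X$ countable, $b\colon X\times X\to[0,\infty)$ with $b(x,x)=0$, $b(x,y)=b(y,x)$, $\sum_y b(x,y)<\infty$; locally finite means each $x$ has only finitely many $y$ with $b(x,y)>0$. Hermitian vector bundle: family $F=(F_x)$ of finite-dimensional complex inner product spaces $\langle\cdot,\cdot\rangle_x$ (linear in second variable); $\Gamma(X;F)=\prod_xF_x$ with the product topology; $\Gamma_c(X;F)$ its finitely supported elements. Connection: unitary $\Phi_{xy}\colon F_y\to F_x$ with $\Phi_{yx}=\Phi_{xy}^{-1}$. Self-adjoint bundle endomorphism: self-adjoint $W(x)\colon F_x\to F_x$. $\mathcal M f(x)=\sum_y b(x,y)(f(x)-\Phi_{xy}f(y))+W(x)f(x)$. The dual operator $\mathcal M'$ on $\Gamma_c(X;F)$ is defined by $(\mathcal M'\varphi,f)=(\varphi,\mathcal Mf)$ for all $f\in\Gamma(X;F)$. *)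

theory Defs
  imports "HOL-Analysis.Analysis"
begin

text \<open>Hermitian vector bundle over X: the fibre over x is modelled (after choosing
an orthonormal basis) as C^(d x), i.e. functions nat => complex vanishing from
index d x on, with the standard inner product (linear in the second variable).\<close>

definition fib :: "nat \<Rightarrow> (nat \<Rightarrow> complex) set" where
  "fib n = {v. \<forall>i\<ge>n. v i = 0}"

definition finner :: "nat \<Rightarrow> (nat \<Rightarrow> complex) \<Rightarrow> (nat \<Rightarrow> complex) \<Rightarrow> complex" where
  "finner n u v = (\<Sum>i<n. cnj (u i) * v i)"

text \<open>Gamma(X;F), carrying the product topology (the subspace topology of the
product topology on functions), and Gamma_c(X;F).\<close>

definition sections :: "('x \<Rightarrow> nat) \<Rightarrow> ('x \<Rightarrow> nat \<Rightarrow> complex) set" where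
  "sections d = {f. \<forall>x. f x \<in> fib (d x)}"

definition csections :: "('x \<Rightarrow> nat) \<Rightarrow> ('x \<Rightarrow> nat \<Rightarrow> complex) set" where
  "csections d = {f \<in> sections d. finite {x. f x \<noteq> (\<lambda>_. 0)}}"

definition pairing :: "('x \<Rightarrow> nat) \<Rightarrow> ('x \<Rightarrow> nat \<Rightarrow> complex) \<Rightarrow> ('x \<Rightarrow> nat \<Rightarrow> complex) \<Rightarrow> complex" where
  "pairing d \<phi> f = (\<Sum>x\<in>{x. \<phi> x \<noteq> (\<lambda>_. 0)}. finner (d x) (\<phi> x) (f x))"

definition locally_finite_graph :: "('x \<Rightarrow> 'x \<Rightarrow> real) \<Rightarrow> bool" where
  "locally_finite_graph b \<longleftrightarrow>
     (\<forall>x y. 0 \<le> b x y) \<and> (\<forall>x. b x x = 0) \<and> (\<forall>x y. b x y = b y x)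
     \<and> (\<forall>x. finite {y. b x y \<noteq> 0})"

definition fib_linear :: "nat \<Rightarrow> ((nat \<Rightarrow> complex) \<Rightarrow> (nat \<Rightarrow> complex)) \<Rightarrow> bool" where
  "fib_linear n T \<longleftrightarrow>
     (\<forall>u\<in>fib n. \<forall>v\<in>fib n. T (\<lambda>i. u i + v i) = (\<lambda>i. T u i + T v i)) \<and>
     (\<forall>c. \<forall>u\<in>fib n. T (\<lambda>i. c * u i) = (\<lambda>i. c * T u i))"

definition connection :: "('x \<Rightarrow> 'x \<Rightarrow> real) \<Rightarrow> ('x \<Rightarrow> nat)
    \<Rightarrow> ('x \<Rightarrow> 'x \<Rightarrow> (nat \<Rightarrow> complex) \<Rightarrow> (nat \<Rightarrow> complex)) \<Rightarrow> bool" where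
  "connection b d \<Phi> \<longleftrightarrow>
     (\<forall>x y. 0 < b x y \<longrightarrow>
        fib_linear (d y) (\<Phi> x y) \<and>
        (\<forall>v\<in>fib (d y). \<Phi> x y v \<in> fib (d x)) \<and>
        (\<forall>u\<in>fib (d y). \<forall>v\<in>fib (d y). finner (d x) (\<Phi> x y u) (\<Phi> x y v) = finner (d y) u v) \<and>
        (\<forall>v\<in>fib (d y). \<Phi> y x (\<Phi> x y v) = v))"

definition selfadj_endo :: "('x \<Rightarrow> nat) \<Rightarrow> ('x \<Rightarrow> (nat \<Rightarrow> complex) \<Rightarrow> (nat \<Rightarrow> complex)) \<Rightarrow> bool" where
  "selfadj_endo d W \<longleftrightarrow>
     (\<forall>x. fib_linear (d x) (W x) \<and> (\<forall>v\<in>fib (d x). W x v \<in> fib (d x)) \<and>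
        (\<forall>u\<in>fib (d x). \<forall>v\<in>fib (d x). finner (d x) (W x u) v = finner (d x) u (W x v)))"

definition Mop :: "('x \<Rightarrow> 'x \<Rightarrow> real) \<Rightarrow> ('x \<Rightarrow> 'x \<Rightarrow> (nat \<Rightarrow> complex) \<Rightarrow> (nat \<Rightarrow> complex))
    \<Rightarrow> ('x \<Rightarrow> (nat \<Rightarrow> complex) \<Rightarrow> (nat \<Rightarrow> complex))
    \<Rightarrow> ('x \<Rightarrow> nat \<Rightarrow> complex) \<Rightarrow> ('x \<Rightarrow> nat \<Rightarrow> complex)" where
  "Mop b \<Phi> W f = (\<lambda>x i. (\<Sum>y\<in>{y. b x y \<noteq> 0}. complex_of_real (b x y) * (f x i - \<Phi> x y (f y) i))
                        + W x (f x) i)"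

end

theory Submission
  imports Defs
begin

text \<open>
  Each coordinate of M f is a finite linear combination of coordinates of f, which gives
  continuity, and the symmetry (M \<phi>, f) = (\<phi>, M f) is a finite rearrangement using the
  unitarity of \<Phi>, the symmetry of b and the self-adjointness of W.

  If M is surjective and M \<psi> = 0 for a finitely supported \<psi>, write \<psi> = M f; then
  (\<psi>, \<psi>) = (M \<psi>, f) = 0. Conversely, let M be injective on finitely supported sections.
  For finite K the equation M f = g can be solved on K: otherwise a nonzero finitely
  supported \<psi> annihilates the range of M, and (M \<psi>, M \<psi>) = (\<psi>, M (M \<psi>)) = 0 forces
  M \<psi> = 0. Exhausting X by finite sets K n, the solution sets S n on K n decrease and are
  affine; their restrictions to a finite set lie in a finite-dimensional space, where
  decreasing affine sets stabilise. A Mittag-Leffler argument then glues compatible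
  restrictions into a global solution.
\<close>

section \<open>Linear algebra in finitely many coordinates\<close>

definition csubspace :: "('c \<Rightarrow> complex) set \<Rightarrow> bool" where
  "csubspace R \<longleftrightarrow> (\<lambda>_. 0) \<in> R \<and> (\<forall>r\<in>R. \<forall>s\<in>R. \<forall>a. (\<lambda>c. r c + a * s c) \<in> R)"

definition caffine :: "('c \<Rightarrow> complex) set \<Rightarrow> bool" where
  "caffine A \<longleftrightarrow> (\<forall>v\<in>A. \<forall>w\<in>A. \<forall>t. (\<lambda>c. v c + t * (w c - v c)) \<in> A)"

text \<open>Gaussian elimination of the coordinate c0 against the pivot p.\<close>

definition eliminate :: "('c \<Rightarrow> complex) \<Rightarrow> 'c \<Rightarrow> ('c \<Rightarrow> complex) \<Rightarrow> 'c \<Rightarrow> complex" where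
  "eliminate p c0 r = (\<lambda>c. r c - r c0 / p c0 * p c)"

lemma eliminate_comb:
  "eliminate p c0 (\<lambda>c. r c + a * s c) = (\<lambda>c. eliminate p c0 r c + a * eliminate p c0 s c)"
  by (simp add: eliminate_def fun_eq_iff add_divide_distrib algebra_simps)

lemma csubspace_eliminate_image:
  assumes "csubspace R"
  shows "csubspace (eliminate p c0 ` R)"
  unfolding csubspace_def
proof (intro conjI ballI allI)
  have "eliminate p c0 (\<lambda>_. 0) = (\<lambda>_. 0)" by (simp add: eliminate_def)
  then show "(\<lambda>_. 0) \<in> eliminate p c0 ` R" using assms unfolding csubspace_def by force
next
  fix r s a assume "r \<in> eliminate p c0 ` R" "s \<in> eliminate p c0 ` R"
  then obtain r' s' where "r' \<in> R" "s' \<in> R" and rs: "r = eliminate p c0 r'" "s = eliminate p c0 s'"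
    by blast
  then have "(\<lambda>c. r' c + a * s' c) \<in> R" using assms unfolding csubspace_def by blast
  then show "(\<lambda>c. r c + a * s c) \<in> eliminate p c0 ` R"
    unfolding rs eliminate_comb[symmetric] by (rule imageI)
qed

lemma eliminate_vanishes:
  assumes "p c0 \<noteq> 0" "\<forall>c. c \<notin> insert c0 C \<longrightarrow> p c = 0" "\<forall>c. c \<notin> insert c0 C \<longrightarrow> r c = 0"
  shows "\<forall>c. c \<notin> C \<longrightarrow> eliminate p c0 r c = 0"
proof (intro allI impI)
  fix c assume "c \<notin> C"
  then show "eliminate p c0 r c = 0"
    using assms(1) assms(2,3)[rule_format, of c] by (cases "c = c0") (auto simp: eliminate_def)
qed

lemma eliminate_eq_imp:
  assumes "p c0 \<noteq> 0" "eliminate p c0 v = eliminate p c0 r"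
  shows "v = (\<lambda>c. r c + (v c0 - r c0) / p c0 * p c)"
proof
  fix c show "v c = r c + (v c0 - r c0) / p c0 * p c"
    using fun_cong[OF assms(2), of c] assms(1) by (simp add: eliminate_def field_simps)
qed

lemma csubspace_annihilator:
  assumes "finite C" "csubspace R" "\<forall>r\<in>R. \<forall>c. c \<notin> C \<longrightarrow> r c = 0"
    and "\<forall>c. c \<notin> C \<longrightarrow> v c = 0" "v \<notin> R"
  shows "\<exists>\<phi>. (\<forall>c. c \<notin> C \<longrightarrow> \<phi> c = 0) \<and> \<phi> \<noteq> (\<lambda>_. 0) \<and> (\<forall>r\<in>R. (\<Sum>c\<in>C. \<phi> c * r c) = 0)"
  using assms
proof (induction C arbitrary: R v rule: finite_induct)
  case empty
  then have "v = (\<lambda>_. 0)" by auto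
  with empty.prems show ?case by (simp add: csubspace_def)
next
  case (insert c0 C R v)
  show ?case
  proof (cases "\<forall>r\<in>R. r c0 = 0")
    case True
    have "(\<Sum>c\<in>C. (if c = c0 then 1 else 0) * r c) = 0" for r :: "'a \<Rightarrow> complex"
      using insert.hyps by (intro sum.neutral) auto
    with True insert.hyps show ?thesis
      by (intro exI[of _ "\<lambda>c. if c = c0 then 1 else 0"]) (auto simp: fun_eq_iff)
  next
    case False
    then obtain p where p: "p \<in> R" "p c0 \<noteq> 0" by auto
    note p_vanishes = insert.prems(2)[THEN bspec, OF p(1)]
    have R_vanish: "\<forall>r\<in>eliminate p c0 ` R. \<forall>c. c \<notin> C \<longrightarrow> r c = 0"
      using eliminate_vanishes[OF p(2) p_vanishes] insert.prems(2) by blast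
    have v_notin: "eliminate p c0 v \<notin> eliminate p c0 ` R"
    proof
      assume "eliminate p c0 v \<in> eliminate p c0 ` R"
      then obtain r where "r \<in> R" and eq: "eliminate p c0 v = eliminate p c0 r" by blast
      from eq have "v = (\<lambda>c. r c + (v c0 - r c0) / p c0 * p c)" by (rule eliminate_eq_imp[of p c0, OF p(2)])
      also have "\<dots> \<in> R" using insert.prems(1) \<open>r \<in> R\<close> p(1) unfolding csubspace_def by blast
      finally show False using insert.prems(4) by contradiction
    qed
    obtain \<phi> where \<phi>: "\<forall>c. c \<notin> C \<longrightarrow> \<phi> c = 0" "\<phi> \<noteq> (\<lambda>_. 0)"
      "\<forall>r\<in>eliminate p c0 ` R. (\<Sum>c\<in>C. \<phi> c * r c) = 0"
      using insert.IH[OF csubspace_eliminate_image[OF insert.prems(1)] R_vanish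
          eliminate_vanishes[OF p(2) p_vanishes insert.prems(3)] v_notin]
      by blast
    define S where "S = (\<Sum>c\<in>C. \<phi> c * p c)"
    show ?thesis
    proof (intro exI conjI ballI)
      show "\<forall>c. c \<notin> insert c0 C \<longrightarrow> (\<phi>(c0 := - S / p c0)) c = 0" using \<phi>(1) by auto
      show "\<phi>(c0 := - S / p c0) \<noteq> (\<lambda>_. 0)" using \<phi>(1,2) insert.hyps by (auto simp: fun_eq_iff)
    next
      fix r assume "r \<in> R"
      then have "(\<Sum>c\<in>C. \<phi> c * eliminate p c0 r c) = 0" using \<phi>(3) by blast
      then have "(\<Sum>c\<in>C. \<phi> c * r c) = r c0 / p c0 * S"
        by (simp add: eliminate_def S_def algebra_simps sum_subtractf sum_distrib_left)
      moreover have "(\<Sum>c\<in>C. (\<phi>(c0 := - S / p c0)) c * r c) = (\<Sum>c\<in>C. \<phi> c * r c)"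
        using insert.hyps by (intro sum.cong) auto
      ultimately show "(\<Sum>c\<in>insert c0 C. (\<phi>(c0 := - S / p c0)) c * r c) = 0"
        using insert.hyps p(2) by simp
    qed
  qed
qed

lemma decseq_caffine_Inter_nonempty:
  assumes "finite C" "decseq A" "\<And>n. A n \<noteq> {}" "\<And>n. caffine (A n)"
    and "\<forall>v\<in>A 0. \<forall>w\<in>A 0. \<forall>c. c \<notin> C \<longrightarrow> v c = w c"
  shows "\<exists>v. \<forall>n. v \<in> A n"
  using assms
proof (induction C arbitrary: A rule: finite_induct)
  case empty
  obtain v where v: "v \<in> A 0" using empty.prems(2) by blast
  have "v \<in> A n" for n
  proof -
    obtain w where w: "w \<in> A n" using empty.prems(2) by blast
    then have "w \<in> A 0" using decseqD[OF empty.prems(1), of 0 n] by blast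
    then have "w = v" using empty.prems(4)[rule_format, OF _ v] by (simp add: fun_eq_iff)
    with w show ?thesis by simp
  qed
  then show ?case by blast
next
  case (insert c0 C A)
  have agree: "\<forall>v\<in>X. \<forall>w\<in>X. \<forall>c. c \<notin> C \<longrightarrow> v c = w c"
    if X: "X \<subseteq> A 0" and X_c0: "\<forall>v\<in>X. \<forall>w\<in>X. v c0 = w c0" for X
  proof (intro ballI allI impI)
    fix v w c assume "v \<in> X" "w \<in> X" "c \<notin> C"
    then show "v c = w c"
      using X X_c0 insert.prems(4)[rule_format, of v w c] by (cases "c = c0") auto
  qed
  txt \<open>Either the hyperplanes v c0 = 0 cut every A n and give a smaller instance, or the
    coordinate c0 is constant on some A N and the tail from N is one.\<close>
  show ?case
  proof (cases "\<forall>n. \<exists>v\<in>A n. \<exists>w\<in>A n. v c0 \<noteq> w c0")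
    case True
    define B where "B n = {v \<in> A n. v c0 = 0}" for n
    have "decseq B" using insert.prems(1) by (auto simp: B_def decseq_def)
    moreover have "B n \<noteq> {}" for n
    proof -
      obtain v w where vw: "v \<in> A n" "w \<in> A n" "v c0 \<noteq> w c0" using True by blast
      define t where "t = - v c0 / (w c0 - v c0)"
      have "(\<lambda>c. v c + t * (w c - v c)) \<in> A n"
        using insert.prems(3) vw(1,2) unfolding caffine_def by blast
      moreover have "v c0 + t * (w c0 - v c0) = 0" using vw(3) by (simp add: t_def field_simps)
      ultimately show ?thesis by (auto simp: B_def)
    qed
    moreover have "caffine (B n)" for n using insert.prems(3) by (auto simp: B_def caffine_def)
    moreover have "\<forall>v\<in>B 0. \<forall>w\<in>B 0. \<forall>c. c \<notin> C \<longrightarrow> v c = w c"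
      by (rule agree) (auto simp: B_def)
    ultimately have "\<exists>v. \<forall>n. v \<in> B n" by (rule insert.IH)
    then show ?thesis by (auto simp: B_def)
  next
    case False
    then obtain N where N: "\<forall>v\<in>A N. \<forall>w\<in>A N. v c0 = w c0" by blast
    have "decseq (\<lambda>n. A (N + n))" using insert.prems(1) by (auto simp: decseq_def)
    moreover have "A (N + n) \<noteq> {}" "caffine (A (N + n))" for n using insert.prems(2,3) by blast+
    moreover have "A N \<subseteq> A 0" using decseqD[OF insert.prems(1)] by blast
    then have "\<forall>v\<in>A (N + 0). \<forall>w\<in>A (N + 0). \<forall>c. c \<notin> C \<longrightarrow> v c = w c"
      using agree[OF _ N] by simp
    ultimately have "\<exists>v. \<forall>n. v \<in> A (N + n)" by (rule insert.IH)
    then obtain v where "\<forall>n. v \<in> A (N + n)" by blast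
    then have "v \<in> A n" for n using decseqD[OF insert.prems(1), of n "N + n"] by auto
    then show ?thesis by blast
  qed
qed

section \<open>Fibres, sections and the pairing\<close>

lemma fib_linear_comb:
  assumes "fib_linear n T" "u \<in> fib n" "v \<in> fib n"
  shows "T (\<lambda>i. a * u i + c * v i) = (\<lambda>i. a * T u i + c * T v i)"
proof -
  have "(\<lambda>i. a * u i) \<in> fib n" "(\<lambda>i. c * v i) \<in> fib n" using assms(2,3) by (auto simp: fib_def)
  with assms show ?thesis unfolding fib_linear_def by simp
qed

lemma fib_linear_expansion:
  assumes "fib_linear n T" "v \<in> fib n"
  shows "T v = (\<lambda>i. \<Sum>j<n. v j * T (\<lambda>k. if k = j then 1 else 0) i)"
proof -
  have "T (\<lambda>i. if i < k then v i else 0) = (\<lambda>i. \<Sum>j<k. v j * T (\<lambda>k. if k = j then 1 else 0) i)"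
    if "k \<le> n" for k
    using that
  proof (induction k)
    case 0
    have "(\<lambda>_. 0) \<in> fib n" by (simp add: fib_def)
    from fib_linear_comb[OF assms(1) this this, of 0 0] show ?case by simp
  next
    case (Suc k)
    have u: "(\<lambda>i. if i < k then v i else 0) \<in> fib n"
      and e: "(\<lambda>i. if i = k then 1 else 0) \<in> fib n"
      using Suc.prems by (auto simp: fib_def)
    have "(\<lambda>i. if i < Suc k then v i else 0)
        = (\<lambda>i. 1 * (if i < k then v i else 0) + v k * (if i = k then 1 else 0))"
      by (auto simp: fun_eq_iff less_Suc_eq)
    then show ?case using Suc fib_linear_comb[OF assms(1) u e, of 1 "v k"] by simp
  qed
  moreover have "(\<lambda>i. if i < n then v i else 0) = v" using assms(2) by (auto simp: fib_def fun_eq_iff)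
  ultimately show ?thesis by force
qed

lemma finner_self: "finner n u u = of_real (\<Sum>i<n. (cmod (u i))\<^sup>2)"
  unfolding finner_def of_real_sum complex_norm_square by (simp add: mult.commute)

lemma finner_self_eq_0:
  assumes "u \<in> fib n" "finner n u u = 0"
  shows "u = (\<lambda>_. 0)"
proof
  fix i
  have "(\<Sum>i<n. (cmod (u i))\<^sup>2) = 0" using assms(2) by (simp only: finner_self of_real_eq_0_iff)
  then have "\<forall>i<n. u i = 0" by (simp add: sum_nonneg_eq_0_iff)
  with assms(1) show "u i = 0" by (cases "i < n") (auto simp: fib_def)
qed

lemma pairing_eq_sum_superset:
  assumes "finite K" "{x. \<phi> x \<noteq> (\<lambda>_. 0)} \<subseteq> K"
  shows "pairing d \<phi> f = (\<Sum>x\<in>K. finner (d x) (\<phi> x) (f x))"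
  unfolding pairing_def
  by (rule sum.mono_neutral_left) (use assms in \<open>auto simp: finner_def\<close>)

lemma pairing_self_eq_0:
  assumes "\<phi> \<in> csections d" "pairing d \<phi> \<phi> = 0"
  shows "\<phi> = (\<lambda>_ _. 0)"
proof -
  define P where "P = {x. \<phi> x \<noteq> (\<lambda>_. 0)}"
  have "finite P" using assms(1) unfolding csections_def P_def by blast
  define r where "r x = (\<Sum>i<d x. (cmod (\<phi> x i))\<^sup>2)" for x
  have "of_real (\<Sum>x\<in>P. r x) = pairing d \<phi> \<phi>"
    unfolding pairing_def P_def[symmetric] finner_self r_def by simp
  then have "(\<Sum>x\<in>P. r x) = 0" using assms(2) by (metis of_real_eq_0_iff)
  moreover have "r x \<ge> 0" for x unfolding r_def by (simp add: sum_nonneg)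
  ultimately have "r x = 0" if "x \<in> P" for x
    using sum_nonneg_eq_0_iff[OF \<open>finite P\<close>] that by blast
  then have "finner (d x) (\<phi> x) (\<phi> x) = 0" if "x \<in> P" for x
    using that unfolding finner_self r_def by simp
  then have "\<forall>x\<in>P. \<phi> x = (\<lambda>_. 0)"
    using finner_self_eq_0 assms(1) unfolding csections_def sections_def by blast
  then show ?thesis unfolding P_def by auto
qed

lemma sections_comb:
  "f \<in> sections d \<Longrightarrow> h \<in> sections d \<Longrightarrow> (\<lambda>x i. a * f x i + c * h x i) \<in> sections d"
  unfolding sections_def fib_def by auto

lemma csections_comb:
  assumes "f \<in> csections d" "h \<in> csections d"
  shows "(\<lambda>x i. a * f x i + c * h x i) \<in> csections d"
proof -
  have "{x. (\<lambda>i. a * f x i + c * h x i) \<noteq> (\<lambda>_. 0)} \<subseteq> {x. f x \<noteq> (\<lambda>_. 0)} \<union> {x. h x \<noteq> (\<lambda>_. 0)}"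
    by auto
  with assms show ?thesis
    unfolding csections_def by (auto intro: sections_comb finite_subset)
qed

lemma zero_in_csections: "(\<lambda>_ _. 0) \<in> csections d"
  unfolding csections_def sections_def fib_def by simp

text \<open>Uncurried, so that for a section only the finitely many coordinates in
  Sigma K (\<lambda>x. {..<d x}) can be nonzero.\<close>

definition restrict_section :: "'x set \<Rightarrow> ('x \<Rightarrow> nat \<Rightarrow> complex) \<Rightarrow> 'x \<times> nat \<Rightarrow> complex" where
  "restrict_section K f = (\<lambda>(x, i). if x \<in> K then f x i else 0)"

lemma restrict_section_comb:
  "restrict_section K (\<lambda>x i. a * f x i + c * h x i)
   = (\<lambda>z. a * restrict_section K f z + c * restrict_section K h z)"
  by (auto simp: restrict_section_def fun_eq_iff)

lemma restrict_section_outside: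
  "f \<in> sections d \<Longrightarrow> z \<notin> Sigma K (\<lambda>x. {..<d x}) \<Longrightarrow> restrict_section K f z = 0"
  by (cases z) (auto simp: restrict_section_def sections_def fib_def)

lemma dual_coords_in_csections:
  assumes "finite K" "\<forall>c. c \<notin> Sigma K (\<lambda>x. {..<d x}) \<longrightarrow> \<phi> c = 0"
  shows "(\<lambda>x i. cnj (\<phi> (x, i))) \<in> csections d"
proof -
  have "{x. (\<lambda>i. cnj (\<phi> (x, i))) \<noteq> (\<lambda>_. 0)} \<subseteq> K" using assms(2) by (auto simp: fun_eq_iff)
  then show ?thesis
    using assms finite_subset unfolding csections_def sections_def fib_def by auto
qed

lemma pairing_dual_coords:
  assumes "finite K" "\<forall>c. c \<notin> Sigma K (\<lambda>x. {..<d x}) \<longrightarrow> \<phi> c = 0"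
  shows "pairing d (\<lambda>x i. cnj (\<phi> (x, i))) f
    = (\<Sum>c\<in>Sigma K (\<lambda>x. {..<d x}). \<phi> c * restrict_section K f c)"
proof -
  have "{x. (\<lambda>i. cnj (\<phi> (x, i))) \<noteq> (\<lambda>_. 0)} \<subseteq> K" using assms(2) by (auto simp: fun_eq_iff)
  then have "pairing d (\<lambda>x i. cnj (\<phi> (x, i))) f = (\<Sum>x\<in>K. finner (d x) (\<lambda>i. cnj (\<phi> (x, i))) (f x))"
    by (rule pairing_eq_sum_superset[OF assms(1)])
  also have "\<dots> = (\<Sum>x\<in>K. \<Sum>i<d x. \<phi> (x, i) * restrict_section K f (x, i))"
    by (intro sum.cong refl) (simp add: finner_def restrict_section_def)
  also have "\<dots> = (\<Sum>c\<in>Sigma K (\<lambda>x. {..<d x}). \<phi> c * restrict_section K f c)"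
    using assms(1) by (simp add: sum.Sigma)
  finally show ?thesis .
qed

section \<open>Compatible restrictions of decreasing affine families\<close>

definition in_stable_image :: "(nat \<Rightarrow> ('x \<Rightarrow> 'a) set) \<Rightarrow> 'x set \<Rightarrow> ('x \<Rightarrow> 'a) \<Rightarrow> bool" where
  "in_stable_image S K u \<longleftrightarrow> (\<forall>n. \<exists>s\<in>S n. \<forall>x\<in>K. s x = u x)"

lemma caffine_restrict_section_image:
  assumes "\<And>s s' t. s \<in> T \<Longrightarrow> s' \<in> T \<Longrightarrow> (\<lambda>x i. (1 - t) * s x i + t * s' x i) \<in> T"
  shows "caffine (restrict_section K ` T)"
  unfolding caffine_def
proof (intro ballI allI)
  fix v w t assume "v \<in> restrict_section K ` T" "w \<in> restrict_section K ` T"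
  then obtain s s' where "s \<in> T" "s' \<in> T" and vw: "v = restrict_section K s" "w = restrict_section K s'"
    by blast
  have "(\<lambda>c. v c + t * (w c - v c)) = restrict_section K (\<lambda>x i. (1 - t) * s x i + t * s' x i)"
    unfolding restrict_section_comb vw by (simp add: fun_eq_iff algebra_simps)
  then show "(\<lambda>c. v c + t * (w c - v c)) \<in> restrict_section K ` T"
    using assms[OF \<open>s \<in> T\<close> \<open>s' \<in> T\<close>] by blast
qed

lemma in_stable_image_extend:
  fixes S :: "nat \<Rightarrow> ('x \<Rightarrow> nat \<Rightarrow> complex) set"
  assumes "finite K'" "K \<subseteq> K'" "decseq S" "\<And>n. S n \<subseteq> sections d"
    and affine: "\<And>n s s' t. s \<in> S n \<Longrightarrow> s' \<in> S n \<Longrightarrow> (\<lambda>x i. (1 - t) * s x i + t * s' x i) \<in> S n"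
    and "in_stable_image S K u"
  shows "\<exists>u'. in_stable_image S K' u' \<and> (\<forall>x\<in>K. u' x = u x)"
proof -
  txt \<open>The restrictions to K' of the members of S n extending u form decreasing affine sets
    in finitely many coordinates.\<close>
  define T where "T n = {s \<in> S n. \<forall>x\<in>K. s x = u x}" for n
  define A where "A n = restrict_section K' ` T n" for n
  have fin: "finite (Sigma K' (\<lambda>x. {..<d x}))" using assms(1) by auto
  have dec: "decseq A" using assms(3) unfolding A_def T_def decseq_def by blast
  have nonempty: "A n \<noteq> {}" for n using assms(6) unfolding A_def T_def in_stable_image_def by blast
  have aff: "caffine (A n)" for n
    unfolding A_def
  proof (rule caffine_restrict_section_image)
    fix s s' t assume "s \<in> T n" "s' \<in> T n"
    then show "(\<lambda>x i. (1 - t) * s x i + t * s' x i) \<in> T n"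
      using affine unfolding T_def by (auto simp: algebra_simps)
  qed
  have "\<forall>v\<in>A 0. \<forall>w\<in>A 0. \<forall>z. z \<notin> Sigma K' (\<lambda>x. {..<d x}) \<longrightarrow> v z = w z"
  proof (intro ballI allI impI)
    fix v w z assume "v \<in> A 0" "w \<in> A 0" and z: "z \<notin> Sigma K' (\<lambda>x. {..<d x})"
    then obtain s s' where "s \<in> sections d" "s' \<in> sections d"
      and "v = restrict_section K' s" "w = restrict_section K' s'"
      using assms(4) unfolding A_def T_def by blast
    then show "v z = w z" using restrict_section_outside[OF _ z] by simp
  qed
  then obtain v where v: "\<forall>n. v \<in> A n"
    using decseq_caffine_Inter_nonempty[OF fin dec nonempty aff] by blast
  have restrict: "\<exists>s\<in>S n. (\<forall>x\<in>K. s x = u x) \<and> (\<forall>x\<in>K'. s x = (\<lambda>i. v (x, i)))" for n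
    using v unfolding A_def T_def by (force simp: restrict_section_def)
  show ?thesis
  proof (intro exI conjI)
    show "in_stable_image S K' (\<lambda>x i. v (x, i))"
      using restrict unfolding in_stable_image_def by blast
    show "\<forall>x\<in>K. (\<lambda>i. v (x, i)) = u x"
      using restrict[of 0] assms(2) by fastforce
  qed
qed

lemma in_stable_image_limit:
  fixes S :: "nat \<Rightarrow> ('x \<Rightarrow> nat \<Rightarrow> complex) set"
  assumes "\<And>m. finite (K m)" "incseq K" "decseq S" "\<And>n. S n \<noteq> {}" "\<And>n. S n \<subseteq> sections d"
    and affine: "\<And>n s s' t. s \<in> S n \<Longrightarrow> s' \<in> S n \<Longrightarrow> (\<lambda>x i. (1 - t) * s x i + t * s' x i) \<in> S n"
  shows "\<exists>f. \<forall>m. in_stable_image S (K m) f"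
proof -
  have extend: "\<exists>u'. in_stable_image S (K m) u' \<and> (\<forall>x\<in>K'. u' x = u x)"
    if "K' \<subseteq> K m" "in_stable_image S K' u" for K' m u
    by (rule in_stable_image_extend[OF assms(1) that(1) assms(3,5) _ that(2)]) (fact affine)
  have "in_stable_image S {} u" for u using assms(4) unfolding in_stable_image_def by blast
  then have "\<exists>u. in_stable_image S (K 0) u" using extend by blast
  moreover have "\<exists>u'. in_stable_image S (K (Suc m)) u' \<and> (\<forall>x\<in>K m. u' x = u x)"
    if "in_stable_image S (K m) u" for m u
    using extend[OF _ that] assms(2) by (simp add: incseq_SucD)
  ultimately obtain T where T: "\<And>m. in_stable_image S (K m) (T m)"
    and T_Suc: "\<And>m x. x \<in> K m \<Longrightarrow> T (Suc m) x = T m x"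
    using dependent_nat_choice[of "\<lambda>m u. in_stable_image S (K m) u" "\<lambda>m u u'. \<forall>x\<in>K m. u' x = u x"]
    by metis
  have T_mono: "T m' x = T m x" if "x \<in> K m" "m \<le> m'" for x m m'
    using that(2)
  proof (induction rule: dec_induct)
    case (step n)
    then show ?case using T_Suc[of x n] incseqD[OF assms(2) step(1)] that(1) by auto
  qed simp
  define f where "f x = T (SOME m. x \<in> K m) x" for x
  have "f x = T m x" if "x \<in> K m" for x m
  proof -
    have "x \<in> K (SOME m. x \<in> K m)" using that by (rule someI)
    then show ?thesis using T_mono that unfolding f_def by (metis nle_le)
  qed
  then have "in_stable_image S (K m) f" for m
    using T[of m] unfolding in_stable_image_def by metis
  then show ?thesis by blast
qed

lemma incseq_covers_finite:
  assumes "incseq K" "\<And>x. \<exists>m. x \<in> K m" "finite F"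
  shows "\<exists>m. F \<subseteq> K m"
  using assms(3)
proof (induction rule: finite_induct)
  case (insert x F)
  then obtain m m' where "F \<subseteq> K m" "x \<in> K m'" using assms(2) by blast
  then show ?case using incseqD[OF assms(1), of m "max m m'"] incseqD[OF assms(1), of m' "max m m'"] by auto
qed simp

lemma in_stable_image_in_sections:
  assumes "\<And>n. S n \<subseteq> sections d" "\<And>x. \<exists>m. x \<in> K m" "\<And>m. in_stable_image S (K m) f"
  shows "f \<in> sections d"
proof -
  have "f x \<in> fib (d x)" for x
  proof -
    obtain m where "x \<in> K m" using assms(2) by blast
    then obtain s where "s \<in> sections d" "s x = f x"
      using assms(1,3) unfolding in_stable_image_def by blast
    then show ?thesis unfolding sections_def by (metis mem_Collect_eq)
  qed
  then show ?thesis unfolding sections_def by blast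
qed

section \<open>The operator\<close>

locale bundle_schroedinger =
  fixes b :: "'x \<Rightarrow> 'x \<Rightarrow> real"
    and d :: "'x \<Rightarrow> nat"
    and \<Phi> :: "'x \<Rightarrow> 'x \<Rightarrow> (nat \<Rightarrow> complex) \<Rightarrow> (nat \<Rightarrow> complex)"
    and W :: "'x \<Rightarrow> (nat \<Rightarrow> complex) \<Rightarrow> (nat \<Rightarrow> complex)"
  assumes graph: "locally_finite_graph b"
    and conn: "connection b d \<Phi>"
    and endo: "selfadj_endo d W"
begin

abbreviation M :: "('x \<Rightarrow> nat \<Rightarrow> complex) \<Rightarrow> 'x \<Rightarrow> nat \<Rightarrow> complex" where
  "M \<equiv> Mop b \<Phi> W"

lemma finite_neighbours: "finite {y. b x y \<noteq> 0}"
  using graph unfolding locally_finite_graph_def by blast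

lemma b_sym: "b x y = b y x"
  using graph unfolding locally_finite_graph_def by blast

lemma b_pos: "b x y \<noteq> 0 \<Longrightarrow> 0 < b x y"
  using graph unfolding locally_finite_graph_def by (metis order_le_less)

lemma Phi_linear: "b x y \<noteq> 0 \<Longrightarrow> fib_linear (d y) (\<Phi> x y)"
  and Phi_in_fib: "b x y \<noteq> 0 \<Longrightarrow> v \<in> fib (d y) \<Longrightarrow> \<Phi> x y v \<in> fib (d x)"
  and Phi_unitary: "b x y \<noteq> 0 \<Longrightarrow> u \<in> fib (d y) \<Longrightarrow> v \<in> fib (d y) \<Longrightarrow>
      finner (d x) (\<Phi> x y u) (\<Phi> x y v) = finner (d y) u v"
  and Phi_inverse: "b x y \<noteq> 0 \<Longrightarrow> v \<in> fib (d y) \<Longrightarrow> \<Phi> y x (\<Phi> x y v) = v"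
  using conn b_pos unfolding connection_def by blast+

lemma Phi_adjoint:
  assumes "b x y \<noteq> 0" "u \<in> fib (d y)" "v \<in> fib (d x)"
  shows "finner (d x) (\<Phi> x y u) v = finner (d y) u (\<Phi> y x v)"
proof -
  have "b y x \<noteq> 0" using assms(1) b_sym by simp
  then have "v = \<Phi> x y (\<Phi> y x v)" "\<Phi> y x v \<in> fib (d y)"
    using Phi_inverse Phi_in_fib assms(3) by auto
  then show ?thesis using Phi_unitary[OF assms(1,2)] by metis
qed

lemma W_linear: "fib_linear (d x) (W x)"
  and W_in_fib: "v \<in> fib (d x) \<Longrightarrow> W x v \<in> fib (d x)"
  and W_selfadjoint: "u \<in> fib (d x) \<Longrightarrow> v \<in> fib (d x) \<Longrightarrow> finner (d x) (W x u) v = finner (d x) u (W x v)"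
  using endo unfolding selfadj_endo_def by blast+

lemma M_in_sections: "f \<in> sections d \<Longrightarrow> M f \<in> sections d"
  using Phi_in_fib W_in_fib unfolding sections_def fib_def Mop_def by auto

lemma M_linear_comb:
  assumes "f \<in> sections d" "h \<in> sections d"
  shows "M (\<lambda>x i. a * f x i + c * h x i) = (\<lambda>x i. a * M f x i + c * M h x i)"
proof (intro ext)
  fix x i
  have fh: "f y \<in> fib (d y)" "h y \<in> fib (d y)" for y using assms unfolding sections_def by auto
  then have Phi_comb: "\<Phi> x y (\<lambda>i. a * f y i + c * h y i) i = a * \<Phi> x y (f y) i + c * \<Phi> x y (h y) i"
      if "b x y \<noteq> 0" for y
    using fib_linear_comb Phi_linear[OF that] by simp
  have W_comb: "W x (\<lambda>i. a * f x i + c * h x i) i = a * W x (f x) i + c * W x (h x) i"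
    using fib_linear_comb[OF W_linear fh(1)[of x] fh(2)[of x]] by simp
  have "M (\<lambda>x i. a * f x i + c * h x i) x i
      = (\<Sum>y | b x y \<noteq> 0. a * (of_real (b x y) * (f x i - \<Phi> x y (f y) i))
          + c * (of_real (b x y) * (h x i - \<Phi> x y (h y) i))) + (a * W x (f x) i + c * W x (h x) i)"
    unfolding Mop_def W_comb by (intro arg_cong2[where f="(+)"] sum.cong) (auto simp: Phi_comb algebra_simps)
  also have "\<dots> = a * M f x i + c * M h x i"
    unfolding Mop_def sum.distrib distrib_left sum_distrib_left by (simp add: add_ac)
  finally show "M (\<lambda>x i. a * f x i + c * h x i) x i = a * M f x i + c * M h x i" .
qed

lemma M_zero: "M (\<lambda>_ _. 0) = (\<lambda>_ _. 0)"
  using M_linear_comb[of "\<lambda>_ _. 0" "\<lambda>_ _. 0" 0 0] by (simp add: sections_def fib_def)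

lemma M_local:
  assumes "\<And>y. y = x \<or> b x y \<noteq> 0 \<Longrightarrow> f y = h y"
  shows "M f x = M h x"
  unfolding Mop_def using assms by (auto intro!: sum.cong)

lemma M_support:
  "{x. M \<phi> x \<noteq> (\<lambda>_. 0)}
   \<subseteq> {x. \<phi> x \<noteq> (\<lambda>_. 0)} \<union> (\<Union>y\<in>{x. \<phi> x \<noteq> (\<lambda>_. 0)}. {x. b y x \<noteq> 0})"
proof (rule subsetI, rule ccontr)
  fix x assume "x \<in> {x. M \<phi> x \<noteq> (\<lambda>_. 0)}"
    and outside: "x \<notin> {x. \<phi> x \<noteq> (\<lambda>_. 0)} \<union> (\<Union>y\<in>{x. \<phi> x \<noteq> (\<lambda>_. 0)}. {x. b y x \<noteq> 0})"
  have "M \<phi> x = M (\<lambda>_ _. 0) x" using outside b_sym[of x] by (intro M_local) auto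
  with \<open>x \<in> _\<close> show False by (simp add: M_zero)
qed

lemma M_in_csections: "\<phi> \<in> csections d \<Longrightarrow> M \<phi> \<in> csections d"
  using M_in_sections finite_subset[OF M_support] finite_neighbours
  unfolding csections_def by auto

lemma M_continuous: "continuous_on (sections d) M"
proof (intro continuous_on_coordinatewise_then_product)
  fix x :: 'x and i :: nat
  let ?e = "\<lambda>j k. if k = j then 1 else (0::complex)"
  let ?M = "\<lambda>f. (\<Sum>y | b x y \<noteq> 0. of_real (b x y) * (f x i - (\<Sum>j<d y. f y j * \<Phi> x y (?e j) i)))
      + (\<Sum>j<d x. f x j * W x (?e j) i)"
  have coord: "continuous_on (sections d) (\<lambda>f. f y j)" for y j
    by (rule continuous_on_product_then_coordinatewise,
        rule continuous_on_product_then_coordinatewise, rule continuous_on_id)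
  have "continuous_on (sections d) ?M"
    by (intro continuous_intros coord)
  moreover have "?M f = M f x i" if "f \<in> sections d" for f
  proof -
    have f: "f y \<in> fib (d y)" for y using that unfolding sections_def by blast
    have "\<Phi> x y (f y) i = (\<Sum>j<d y. f y j * \<Phi> x y (?e j) i)" if "b x y \<noteq> 0" for y
      using fun_cong[OF fib_linear_expansion[OF Phi_linear[OF that] f[of y]], of i] by simp
    moreover have "W x (f x) i = (\<Sum>j<d x. f x j * W x (?e j) i)"
      using fun_cong[OF fib_linear_expansion[OF W_linear f[of x]], of i] by simp
    ultimately show ?thesis unfolding Mop_def by simp
  qed
  ultimately show "continuous_on (sections d) (\<lambda>f. M f x i)"
    by (rule continuous_on_eq)
qed

lemma finner_M_left:
  "finner (d x) (M \<phi> x) v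
   = (\<Sum>y | b x y \<noteq> 0. of_real (b x y) * finner (d x) (\<phi> x) v)
     - (\<Sum>y | b x y \<noteq> 0. of_real (b x y) * finner (d x) (\<Phi> x y (\<phi> y)) v)
     + finner (d x) (W x (\<phi> x)) v"
  unfolding finner_def Mop_def
  by (simp add: sum_distrib_left sum_distrib_right sum_subtractf sum.distrib algebra_simps
      sum.swap[of _ "{y. b x y \<noteq> 0}"])

lemma finner_M_right:
  "finner (d x) v (M f x)
   = (\<Sum>y | b x y \<noteq> 0. of_real (b x y) * finner (d x) v (f x))
     - (\<Sum>y | b x y \<noteq> 0. of_real (b x y) * finner (d x) v (\<Phi> x y (f y)))
     + finner (d x) v (W x (f x))"
  unfolding finner_def Mop_def
  by (simp add: sum_distrib_left sum_distrib_right sum_subtractf sum.distrib algebra_simps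
      sum.swap[of _ "{y. b x y \<noteq> 0}"])

lemma sum_neighbours_swap:
  assumes "finite Q" "P \<subseteq> Q" "\<And>x y. x \<in> P \<Longrightarrow> b x y \<noteq> 0 \<Longrightarrow> y \<in> Q"
    and "\<And>x y. x \<notin> P \<Longrightarrow> h x y = 0"
  shows "(\<Sum>x\<in>Q. \<Sum>y | b x y \<noteq> 0. h y x) = (\<Sum>x\<in>Q. \<Sum>y | b x y \<noteq> 0. h x y)"
proof -
  have restrict: "(\<Sum>y | b x y \<noteq> 0. g y) = (\<Sum>y\<in>Q. if b x y \<noteq> 0 then g y else 0)"
    if "\<And>y. b x y \<noteq> 0 \<Longrightarrow> y \<notin> Q \<Longrightarrow> g y = 0" for x g
  proof -
    have "(\<Sum>y | b x y \<noteq> 0. g y) = (\<Sum>y\<in>{y \<in> Q. b x y \<noteq> 0}. g y)"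
      using that finite_neighbours by (intro sum.mono_neutral_right) auto
    then show ?thesis by (simp add: sum.inter_filter[OF assms(1)])
  qed
  have "(\<Sum>x\<in>Q. \<Sum>y | b x y \<noteq> 0. h y x) = (\<Sum>x\<in>Q. \<Sum>y\<in>Q. if b x y \<noteq> 0 then h y x else 0)"
    using assms(2,4) by (intro sum.cong restrict) auto
  also have "\<dots> = (\<Sum>x\<in>Q. \<Sum>y\<in>Q. if b x y \<noteq> 0 then h x y else 0)"
    by (subst sum.swap) (simp add: b_sym)
  also have "\<dots> = (\<Sum>x\<in>Q. \<Sum>y | b x y \<noteq> 0. h x y)"
    using assms(3,4) by (intro sum.cong restrict[symmetric]) auto
  finally show ?thesis .
qed

lemma pairing_M_symmetric:
  assumes "\<phi> \<in> csections d" "f \<in> sections d"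
  shows "pairing d (M \<phi>) f = pairing d \<phi> (M f)"
proof -
  define P where "P = {x. \<phi> x \<noteq> (\<lambda>_. 0)}"
  define Q where "Q = P \<union> (\<Union>x\<in>P. {y. b x y \<noteq> 0})"
  have "finite P" using assms(1) unfolding csections_def P_def by blast
  then have "finite Q" unfolding Q_def using finite_neighbours by blast
  have fib: "\<phi> x \<in> fib (d x)" "f x \<in> fib (d x)" for x
    using assms unfolding csections_def sections_def by auto
  define h where "h x y = of_real (b x y) * finner (d x) (\<phi> x) (\<Phi> x y (f y))" for x y
  have adjoint: "of_real (b x y) * finner (d x) (\<Phi> x y (\<phi> y)) (f x) = h y x" if "b x y \<noteq> 0" for x y
    using Phi_adjoint[OF that fib] b_sym[of x y] unfolding h_def by simp
  have h_outside: "h x y = 0" if "x \<notin> P" for x y using that unfolding h_def P_def finner_def by simp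
  have "(\<Sum>x\<in>Q. \<Sum>y | b x y \<noteq> 0. of_real (b x y) * finner (d x) (\<Phi> x y (\<phi> y)) (f x))
      = (\<Sum>x\<in>Q. \<Sum>y | b x y \<noteq> 0. h y x)"
    using adjoint by (intro sum.cong refl) auto
  also have "\<dots> = (\<Sum>x\<in>Q. \<Sum>y | b x y \<noteq> 0. h x y)"
    using h_outside by (intro sum_neighbours_swap[OF \<open>finite Q\<close>]) (auto simp: Q_def)
  finally have swap: "(\<Sum>x\<in>Q. \<Sum>y | b x y \<noteq> 0. of_real (b x y) * finner (d x) (\<Phi> x y (\<phi> y)) (f x))
      = (\<Sum>x\<in>Q. \<Sum>y | b x y \<noteq> 0. h x y)" .
  have "pairing d (M \<phi>) f = (\<Sum>x\<in>Q. finner (d x) (M \<phi> x) (f x))"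
    using M_support \<open>finite Q\<close> unfolding Q_def P_def by (intro pairing_eq_sum_superset) auto
  also have "\<dots> = (\<Sum>x\<in>Q. finner (d x) (\<phi> x) (M f x))"
    using swap W_selfadjoint[OF fib] unfolding finner_M_left finner_M_right h_def
    by (simp add: sum.distrib sum_subtractf)
  also have "\<dots> = pairing d \<phi> (M f)"
    using \<open>finite Q\<close> by (intro pairing_eq_sum_superset[symmetric]) (auto simp: Q_def P_def)
  finally show ?thesis .
qed

section \<open>Surjectivity and injectivity on finitely supported sections\<close>

lemma inj_on_csections_if_surjective:
  assumes "M ` sections d = sections d"
  shows "inj_on M (csections d)"
proof (rule inj_onI)
  fix \<phi> \<phi>' assume "\<phi> \<in> csections d" "\<phi>' \<in> csections d" "M \<phi> = M \<phi>'"
  define \<psi> where "\<psi> x i = 1 * \<phi> x i + (-1) * \<phi>' x i" for x i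
  have "\<psi> \<in> csections d" unfolding \<psi>_def using \<open>\<phi> \<in> _\<close> \<open>\<phi>' \<in> _\<close> by (rule csections_comb)
  then obtain f where f: "f \<in> sections d" "M f = \<psi>"
    using assms unfolding csections_def by (metis (no_types, lifting) imageE mem_Collect_eq)
  have "M \<psi> = (\<lambda>x i. 1 * M \<phi> x i + (-1) * M \<phi>' x i)"
    unfolding \<psi>_def using \<open>\<phi> \<in> _\<close> \<open>\<phi>' \<in> _\<close> by (intro M_linear_comb) (auto simp: csections_def)
  with \<open>M \<phi> = M \<phi>'\<close> have "M \<psi> = (\<lambda>_ _. 0)" by simp
  then have "pairing d \<psi> \<psi> = 0"
    using pairing_M_symmetric[OF \<open>\<psi> \<in> _\<close> f(1)] f(2) unfolding pairing_def by simp
  then have "\<psi> = (\<lambda>_ _. 0)" using \<open>\<psi> \<in> _\<close> by (rule pairing_self_eq_0[rotated])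
  then show "\<phi> = \<phi>'" unfolding \<psi>_def by (simp add: fun_eq_iff)
qed

lemma range_annihilator_eq_0:
  assumes "inj_on M (csections d)" "\<psi> \<in> csections d"
    and "\<And>f. f \<in> sections d \<Longrightarrow> pairing d \<psi> (M f) = 0"
  shows "\<psi> = (\<lambda>_ _. 0)"
proof -
  have "M \<psi> \<in> csections d" using assms(2) by (rule M_in_csections)
  moreover have "pairing d (M \<psi>) (M \<psi>) = 0"
    using calculation assms(2,3) pairing_M_symmetric unfolding csections_def by simp
  ultimately have "M \<psi> = M (\<lambda>_ _. 0)" by (simp add: pairing_self_eq_0 M_zero)
  then show ?thesis by (rule inj_onD[OF assms(1) _ assms(2) zero_in_csections])
qed

lemma csubspace_restricted_range: "csubspace ((\<lambda>f. restrict_section K (M f)) ` sections d)"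
  unfolding csubspace_def
proof (intro conjI ballI allI)
  show "(\<lambda>_. 0) \<in> (\<lambda>f. restrict_section K (M f)) ` sections d"
    using M_zero zero_in_csections unfolding csections_def by (force simp: restrict_section_def)
next
  fix r s a assume "r \<in> (\<lambda>f. restrict_section K (M f)) ` sections d"
    "s \<in> (\<lambda>f. restrict_section K (M f)) ` sections d"
  then obtain f h where f: "f \<in> sections d" and h: "h \<in> sections d"
    and rs: "r = restrict_section K (M f)" "s = restrict_section K (M h)"
    by blast
  have "(\<lambda>c. r c + a * s c) = restrict_section K (M (\<lambda>x i. 1 * f x i + a * h x i))"
    unfolding M_linear_comb[OF f h] restrict_section_comb rs by simp
  then show "(\<lambda>c. r c + a * s c) \<in> (\<lambda>f. restrict_section K (M f)) ` sections d"
    using sections_comb[OF f h, of 1 a] by blast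
qed

lemma M_surjective_on_finite:
  assumes "inj_on M (csections d)" "g \<in> sections d" "finite K"
  shows "\<exists>f\<in>sections d. \<forall>x\<in>K. M f x = g x"
proof -
  define C where "C = Sigma K (\<lambda>x. {..<d x})"
  define R where "R = (\<lambda>f. restrict_section K (M f)) ` sections d"
  have R_outside: "\<forall>r\<in>R. \<forall>c. c \<notin> C \<longrightarrow> r c = 0"
    using restrict_section_outside[OF M_in_sections] unfolding R_def C_def by blast
  have "restrict_section K g \<in> R"
  proof (rule ccontr)
    assume g_notin: "restrict_section K g \<notin> R"
    have "\<forall>c. c \<notin> C \<longrightarrow> restrict_section K g c = 0"
      using restrict_section_outside[OF assms(2)] unfolding C_def by simp
    from csubspace_annihilator[OF _ csubspace_restricted_range R_outside[unfolded R_def] this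
        g_notin[unfolded R_def]]
    obtain \<phi> where \<phi>: "\<forall>c. c \<notin> C \<longrightarrow> \<phi> c = 0" "\<phi> \<noteq> (\<lambda>_. 0)"
      "\<forall>r\<in>R. (\<Sum>c\<in>C. \<phi> c * r c) = 0"
      using assms(3) unfolding R_def C_def by blast
    have "(\<lambda>x i. cnj (\<phi> (x, i))) = (\<lambda>_ _. 0)"
    proof (rule range_annihilator_eq_0[OF assms(1)])
      show "(\<lambda>x i. cnj (\<phi> (x, i))) \<in> csections d"
        using dual_coords_in_csections[OF assms(3)] \<phi>(1) unfolding C_def by blast
      show "pairing d (\<lambda>x i. cnj (\<phi> (x, i))) (M f) = 0" if "f \<in> sections d" for f
        using pairing_dual_coords[OF assms(3)] \<phi>(1,3) that unfolding R_def C_def by simp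
    qed
    then show False using \<phi>(2) by (auto simp: fun_eq_iff)
  qed
  then obtain f where f: "f \<in> sections d" and eq: "restrict_section K g = restrict_section K (M f)"
    unfolding R_def by (rule imageE)
  have "M f x i = g x i" if "x \<in> K" for x i
    using fun_cong[OF eq, of "(x, i)"] that by (simp add: restrict_section_def)
  with f show ?thesis by blast
qed

lemma surjective_if_inj_on_csections:
  fixes K :: "nat \<Rightarrow> 'x set"
  assumes inj: "inj_on M (csections d)"
    and K: "\<And>m. finite (K m)" "incseq K" "\<And>x. \<exists>m. x \<in> K m"
  shows "M ` sections d = sections d"
proof
  show "M ` sections d \<subseteq> sections d" using M_in_sections by blast
next
  show "sections d \<subseteq> M ` sections d"
  proof
    fix g assume g: "g \<in> sections d"
    define S where "S n = {f \<in> sections d. \<forall>x\<in>K n. M f x = g x}" for n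
    have "decseq S" using incseqD[OF K(2)] unfolding S_def decseq_def by blast
    moreover have "S n \<noteq> {}" for n
      using M_surjective_on_finite[OF inj g K(1)] unfolding S_def by blast
    moreover have "S n \<subseteq> sections d" for n unfolding S_def by blast
    moreover have "(\<lambda>x i. (1 - t) * f x i + t * f' x i) \<in> S n" if "f \<in> S n" "f' \<in> S n" for n f f' t
    proof -
      have f: "f \<in> sections d" "\<forall>x\<in>K n. M f x = g x"
        and f': "f' \<in> sections d" "\<forall>x\<in>K n. M f' x = g x"
        using that unfolding S_def by auto
      have "M (\<lambda>x i. (1 - t) * f x i + t * f' x i) x = g x" if "x \<in> K n" for x
        using f(2) f'(2) that unfolding M_linear_comb[OF f(1) f'(1)] by (auto simp: fun_eq_iff algebra_simps)
      then show ?thesis using sections_comb[OF f(1) f'(1)] unfolding S_def by blast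
    qed
    ultimately have "\<exists>f. \<forall>m. in_stable_image S (K m) f" by (rule in_stable_image_limit[OF K(1,2)])
    then obtain f where f: "\<And>m. in_stable_image S (K m) f" by blast
    have "f \<in> sections d" using in_stable_image_in_sections[OF _ K(3) f] unfolding S_def by blast
    moreover have "M f x = g x" for x
    proof -
      obtain m where m: "insert x {y. b x y \<noteq> 0} \<subseteq> K m"
        using incseq_covers_finite[OF K(2,3)] finite_neighbours by blast
      then obtain s where "s \<in> S m" "\<forall>y\<in>K m. s y = f y" using f unfolding in_stable_image_def by blast
      then have "M f x = M s x" using m by (intro M_local) auto
      also have "\<dots> = g x" using \<open>s \<in> S m\<close> m unfolding S_def by blast
      finally show ?thesis .
    qed
    ultimately show "g \<in> M ` sections d" by (intro image_eqI[of _ _ f]) auto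
  qed
qed

end

lemma countable_finite_exhaustion:
  obtains K :: "nat \<Rightarrow> 'x::countable set"
  where "\<And>m. finite (K m)" "incseq K" "\<And>x. \<exists>m. x \<in> K m"
proof
  show "finite {x::'x. to_nat x < m}" for m
    using finite_vimageI[of "{..<m}" to_nat] by (simp add: vimage_def)
  show "incseq (\<lambda>m. {x::'x. to_nat x < m})" by (auto simp: incseq_def)
  show "\<exists>m. x \<in> {x. to_nat x < m}" for x :: 'x by auto
qed

theorem lemma4p2:
  fixes b :: "'x::countable \<Rightarrow> 'x \<Rightarrow> real"
    and d :: "'x \<Rightarrow> nat"
    and \<Phi> :: "'x \<Rightarrow> 'x \<Rightarrow> (nat \<Rightarrow> complex) \<Rightarrow> (nat \<Rightarrow> complex)"
    and W :: "'x \<Rightarrow> (nat \<Rightarrow> complex) \<Rightarrow> (nat \<Rightarrow> complex)"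
  assumes "locally_finite_graph b"
    and "connection b d \<Phi>"
    and "selfadj_endo d W"
  shows "Mop b \<Phi> W ` sections d \<subseteq> sections d
       \<and> continuous_on (sections d) (Mop b \<Phi> W)
       \<and> (\<forall>\<phi>\<in>csections d. Mop b \<Phi> W \<phi> \<in> csections d
            \<and> (\<forall>f\<in>sections d. pairing d (Mop b \<Phi> W \<phi>) f = pairing d \<phi> (Mop b \<Phi> W f)))
       \<and> (Mop b \<Phi> W ` sections d = sections d \<longleftrightarrow> inj_on (Mop b \<Phi> W) (csections d))"
proof -
  interpret bundle_schroedinger b d \<Phi> W using assms by unfold_locales
  obtain K :: "nat \<Rightarrow> 'x set" where K: "\<And>m. finite (K m)" "incseq K" "\<And>x. \<exists>m. x \<in> K m"
    using countable_finite_exhaustion by blast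
  show ?thesis
    using M_in_sections M_continuous M_in_csections pairing_M_symmetric
      inj_on_csections_if_surjective surjective_if_inj_on_csections[OF _ K]
    by blast
qed

end
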